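(* Let $\pi:\Gamma\to\Gamma_0$ be a surjective group homomorphism, $\mathcal H$ a Hilbert space and $\mu:\Gamma_0\to U(\mathcal H)$ a map with $\mu(e)=\mathrm{Id}$. Then (1) $\mathrm{def}(\mu)=\mathrm{def}(\mu\circ\pi)$, and (2) $\min(D(\mu\circ\pi),\sqrt3)=\min(D(\mu),\sqrt3)$.
   Context: For maps $\mu,\nu:\Gamma\to U(\mathcal H)$ put $\|\mu-\nu\|=\sup_\gamma\|\mu(\gamma)-\nu(\gamma)\|$ (operator norm), $D(\mu)=\inf\{\|\mu-\nu\|:\nu\in\mathrm{Hom}(\Gamma,U(\mathcal H))\}$ and $\mathrm{def}(\mu)=\sup_{x,y\in\Gamma}\|\mu(xy)-\mu(x)\mu(y)\|$. *)

theory Defs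
  imports "HOL-Analysis.Analysis" "HOL-Algebra.Group"
begin

text \<open>A complex Hilbert space is modelled as a real Hilbert space (type class
  real_inner + complete_space) together with a complex structure J
  (multiplication by the imaginary unit): a real-linear map with J (J x) = -x
  that preserves the real inner product. The complex inner product is then
  recovered as inner x y + i * inner x (J y) (up to convention).\<close>

definition complex_structure :: "('h::real_inner \<Rightarrow> 'h) \<Rightarrow> bool" where
  "complex_structure J \<longleftrightarrow> linear J \<and> (\<forall>x. J (J x) = - x) \<and>
     (\<forall>x y. inner (J x) (J y) = inner x y)"

text \<open>Unitary operators on the complex Hilbert space (H, J): complex-linear
  (real-linear and commuting with J), surjective isometries.\<close>

definition unitary_op :: "('h::real_inner \<Rightarrow> 'h) \<Rightarrow> ('h \<Rightarrow> 'h) \<Rightarrow> bool" where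
  "unitary_op J U \<longleftrightarrow> linear U \<and> (\<forall>x. U (J x) = J (U x)) \<and> surj U \<and>
     (\<forall>x. norm (U x) = norm x)"

definition unitary_hom :: "('g, 'm) monoid_scheme \<Rightarrow> ('h::real_inner \<Rightarrow> 'h)
    \<Rightarrow> ('g \<Rightarrow> 'h \<Rightarrow> 'h) \<Rightarrow> bool" where
  "unitary_hom G J \<nu> \<longleftrightarrow> (\<forall>x\<in>carrier G. unitary_op J (\<nu> x)) \<and>
     (\<forall>x\<in>carrier G. \<forall>y\<in>carrier G. \<nu> (x \<otimes>\<^bsub>G\<^esub> y) = \<nu> x \<circ> \<nu> y)"

definition map_dist :: "('g, 'm) monoid_scheme \<Rightarrow> ('g \<Rightarrow> 'h::real_normed_vector \<Rightarrow> 'h)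
    \<Rightarrow> ('g \<Rightarrow> 'h \<Rightarrow> 'h) \<Rightarrow> real" where
  "map_dist G \<mu> \<nu> = (SUP x\<in>carrier G. onorm (\<lambda>v. \<mu> x v - \<nu> x v))"

definition hom_dist :: "('g, 'm) monoid_scheme \<Rightarrow> ('h::real_inner \<Rightarrow> 'h)
    \<Rightarrow> ('g \<Rightarrow> 'h \<Rightarrow> 'h) \<Rightarrow> real" where
  "hom_dist G J \<mu> = Inf {map_dist G \<mu> \<nu> | \<nu>. unitary_hom G J \<nu>}"

definition defect :: "('g, 'm) monoid_scheme \<Rightarrow> ('g \<Rightarrow> 'h::real_normed_vector \<Rightarrow> 'h) \<Rightarrow> real" where
  "defect G \<mu> = (SUP p\<in>carrier G \<times> carrier G.
      onorm (\<lambda>v. \<mu> (fst p \<otimes>\<^bsub>G\<^esub> snd p) v - \<mu> (fst p) (\<mu> (snd p) v)))"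

end

theory Submission
  imports Defs
begin

(* Let pi : G -> G0 be a surjective homomorphism and mu : G0 -> U(H)
   with mu(1) = id.
   (1) The defect and the sup-distance are suprema over carrier sets; precomposing with a
       surjection only reparametrises them, so def(mu o pi) = def(mu).
   (2) Every homomorphism nu0 of G0 gives the homomorphism nu0 o pi of G at the same
       distance, hence D(mu o pi) <= D(mu).  Conversely let nu be a homomorphism of G with
       ||mu o pi - nu|| = d < sqrt 3.  On ker pi we have mu o pi = id, so ||nu(k) - id|| <= d.
       The parallelogram law gives (4 - d^2) ||Tv - v||^2 <= ||T^2 v - v||^2 for a linear
       isometry T with ||T - id|| <= d; since ker pi is closed under squaring, iterating
       forces nu(k) = id.  Hence nu is constant on the fibres of pi and descends to a
       homomorphism nu0 of G0 with nu = nu0 o pi at the same distance d.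
   An abstract comparison of infima (distances below sqrt 3 are common to both sets) then
   gives min(D(mu o pi), sqrt 3) = min(D(mu), sqrt 3). *)

lemma unitary_op_bounded_linear:
  assumes "unitary_op J U" shows "bounded_linear U"
proof -
  have l: "linear U" and n: "\<And>x. norm (U x) = norm x"
    using assms unfolding unitary_op_def by auto
  show ?thesis
    by (rule bounded_linear_intro[where K=1]) (simp_all add: linear_add[OF l] linear_scale[OF l] n)
qed

lemma unitary_op_id: "unitary_op J id"
  unfolding unitary_op_def by (simp add: linear_id)

text \<open>The difference of two unitaries is bounded, of operator norm at most 2; this makes all
  suprema defining the sup-distance finite.\<close>

lemma onorm_unitary_diff:
  assumes "unitary_op J U" "unitary_op J V"
  shows "bounded_linear (\<lambda>v. U v - V v)" and "0 \<le> onorm (\<lambda>v. U v - V v)"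
    and "onorm (\<lambda>v. U v - V v) \<le> 2"
proof -
  show bl: "bounded_linear (\<lambda>v. U v - V v)"
    using unitary_op_bounded_linear[OF assms(1)] unitary_op_bounded_linear[OF assms(2)]
    by (rule bounded_linear_sub)
  show "0 \<le> onorm (\<lambda>v. U v - V v)" using onorm_pos_le[OF bl] .
  have nU: "\<And>x. norm (U x) = norm x" and nV: "\<And>x. norm (V x) = norm x"
    using assms unfolding unitary_op_def by auto
  show "onorm (\<lambda>v. U v - V v) \<le> 2"
  proof (rule onorm_bound)
    fix x show "norm (U x - V x) \<le> 2 * norm x"
      using norm_triangle_ineq4[of "U x" "V x"] nU nV by simp
  qed simp
qed

lemma map_dist_upper:
  assumes "\<forall>x\<in>carrier G. unitary_op J (\<mu> x)" "\<forall>x\<in>carrier G. unitary_op J (\<nu> x)"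
    and "x \<in> carrier G"
  shows "onorm (\<lambda>v. \<mu> x v - \<nu> x v) \<le> map_dist G \<mu> \<nu>"
proof -
  have "bdd_above ((\<lambda>x. onorm (\<lambda>v. \<mu> x v - \<nu> x v)) ` carrier G)"
    using assms(1,2) onorm_unitary_diff(3) by (intro bdd_aboveI[where M=2]) fastforce
  then show ?thesis unfolding map_dist_def by (rule cSUP_upper[OF assms(3)])
qed

lemma map_dist_nonneg:
  assumes "group G" "\<forall>x\<in>carrier G. unitary_op J (\<mu> x)" "\<forall>x\<in>carrier G. unitary_op J (\<nu> x)"
  shows "0 \<le> map_dist G \<mu> \<nu>"
proof -
  have one: "\<one>\<^bsub>G\<^esub> \<in> carrier G" using group.is_monoid[OF assms(1)] by (rule monoid.one_closed)
  have "0 \<le> onorm (\<lambda>v. \<mu> \<one>\<^bsub>G\<^esub> v - \<nu> \<one>\<^bsub>G\<^esub> v)"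
    using one assms(2,3) onorm_unitary_diff(2) by blast
  also have "\<dots> \<le> map_dist G \<mu> \<nu>" using assms(2,3) one by (rule map_dist_upper)
  finally show ?thesis .
qed

lemma map_dist_comp_surj:
  assumes "\<pi> ` carrier G = carrier G0"
  shows "map_dist G (f \<circ> \<pi>) (h \<circ> \<pi>) = map_dist G0 f h"
  unfolding map_dist_def using assms[symmetric] by (simp add: image_image)

lemma defect_comp_surj_hom:
  assumes "\<pi> \<in> hom G G0" and "\<pi> ` carrier G = carrier G0"
  shows "defect G (\<mu> \<circ> \<pi>) = defect G0 \<mu>"
proof -
  define F where "F q = onorm (\<lambda>v. \<mu> (fst q \<otimes>\<^bsub>G0\<^esub> snd q) v - \<mu> (fst q) (\<mu> (snd q) v))" for q
  have "defect G (\<mu> \<circ> \<pi>) = (SUP p\<in>carrier G \<times> carrier G. F (map_prod \<pi> \<pi> p))"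
    unfolding defect_def F_def using assms(1) by (intro SUP_cong) (auto simp: hom_mult)
  also have "\<dots> = (SUP q\<in>map_prod \<pi> \<pi> ` (carrier G \<times> carrier G). F q)"
    by (simp add: image_image)
  also have "map_prod \<pi> \<pi> ` (carrier G \<times> carrier G) = carrier G0 \<times> carrier G0"
    using assms(2) by (simp add: map_prod_surj_on)
  finally show ?thesis unfolding defect_def F_def by simp
qed

section \<open>Rigidity of isometries within sqrt 3 of the identity\<close>

text \<open>Parallelogram law: if T is a linear isometry with ||T - id|| <= d, then T^2 moves
  every vector by a factor sqrt(4 - d^2) more than T does.\<close>

lemma isometry_square_displacement:
  fixes T :: "'h::real_inner \<Rightarrow> 'h"
  assumes l: "linear T" and n: "\<And>x. norm (T x) = norm x"
    and b: "\<And>y. norm (T y - y) \<le> d * norm y"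
  shows "(4 - d\<^sup>2) * (norm (T v - v))\<^sup>2 \<le> (norm (T (T v) - v))\<^sup>2"
proof -
  define y where "y = T v - v"
  have e: "T (T v) - v = T y + y" unfolding y_def by (simp add: linear_diff[OF l])
  have "(norm (T y + y))\<^sup>2 + (norm (T y - y))\<^sup>2 = 2 * (norm (T y))\<^sup>2 + 2 * (norm y)\<^sup>2"
    by (simp add: power2_norm_eq_inner inner_add_left inner_add_right inner_diff_left
        inner_diff_right inner_commute)
  then have par: "(norm (T y + y))\<^sup>2 + (norm (T y - y))\<^sup>2 = 4 * (norm y)\<^sup>2" using n[of y] by simp
  have "(norm (T y - y))\<^sup>2 \<le> (d * norm y)\<^sup>2" using b[of y] by (simp add: power_mono)
  then have "(norm (T y - y))\<^sup>2 \<le> d\<^sup>2 * (norm y)\<^sup>2" by (simp add: power_mult_distrib)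
  then show ?thesis using par e unfolding y_def by (simp add: algebra_simps)
qed

text \<open>A set S of linear isometries that is closed under squaring and lies uniformly within
  d < sqrt 3 of the identity consists of the identity only: iterating the previous lemma,
  (4 - d^2)^k ||Tv - v||^2 stays bounded by (d ||v||)^2, while 4 - d^2 > 1.\<close>

lemma isometries_near_id_trivial:
  fixes S :: "('h::real_inner \<Rightarrow> 'h) set"
  assumes iso: "\<And>T. T \<in> S \<Longrightarrow> linear T \<and> (\<forall>v. norm (T v) = norm v)"
    and sq: "\<And>T. T \<in> S \<Longrightarrow> T \<circ> T \<in> S"
    and near: "\<And>T v. T \<in> S \<Longrightarrow> norm (T v - v) \<le> d * norm v"
    and d0: "0 \<le> d" and d3: "d < sqrt 3" and T: "T \<in> S"
  shows "T = id"
proof -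
  define c where "c = 4 - d\<^sup>2"
  have "d\<^sup>2 < 3" using d3 d0 by (metis power_strict_mono real_sqrt_pow2 zero_le_numeral pos2)
  then have c1: "1 < c" unfolding c_def by simp
  have iter: "c ^ k * (norm (T v - v))\<^sup>2 \<le> (d * norm v)\<^sup>2" if "T \<in> S" for k T v
    using that
  proof (induction k arbitrary: T)
    case 0
    then show ?case using near by (simp add: power_mono)
  next
    case (Suc k)
    have "c * (norm (T v - v))\<^sup>2 \<le> (norm (T (T v) - v))\<^sup>2"
      unfolding c_def using iso[OF Suc.prems] near[OF Suc.prems]
      by (intro isometry_square_displacement) auto
    then have "c ^ Suc k * (norm (T v - v))\<^sup>2 \<le> c ^ k * (norm ((T \<circ> T) v - v))\<^sup>2"
      using c1 by (simp add: mult_left_mono)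
    also have "\<dots> \<le> (d * norm v)\<^sup>2" using Suc.IH sq[OF Suc.prems] .
    finally show ?case .
  qed
  have "T v = v" for v
  proof (rule ccontr)
    assume "T v \<noteq> v"
    then have pos: "0 < (norm (T v - v))\<^sup>2" by simp
    obtain k where "(d * norm v)\<^sup>2 / (norm (T v - v))\<^sup>2 < c ^ k" using real_arch_pow[OF c1] by blast
    then have "(d * norm v)\<^sup>2 < c ^ k * (norm (T v - v))\<^sup>2" using pos by (simp add: divide_less_eq)
    then show False using iter[OF T, of k v] by linarith
  qed
  then show ?thesis by auto
qed

lemma unitary_hom_comp:
  assumes "unitary_hom G0 J \<nu>0" and "\<pi> \<in> hom G G0"
  shows "unitary_hom G J (\<nu>0 \<circ> \<pi>)"
  using assms unfolding unitary_hom_def by (auto simp: hom_in_carrier hom_mult)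

text \<open>A unitary homomorphism of G within distance < sqrt 3 of mu o pi is trivial on the
  kernel of pi, since mu o pi is the identity there.\<close>

lemma unitary_hom_trivial_on_kernel:
  assumes "group_hom G G0 \<pi>" and mu: "\<forall>x\<in>carrier G0. unitary_op J (\<mu> x)"
    and mu1: "\<mu> \<one>\<^bsub>G0\<^esub> = id" and nu: "unitary_hom G J \<nu>"
    and close: "map_dist G (\<mu> \<circ> \<pi>) \<nu> < sqrt 3" and k: "k \<in> {k \<in> carrier G. \<pi> k = \<one>\<^bsub>G0\<^esub>}"
  shows "\<nu> k = id"
proof -
  interpret group_hom G G0 \<pi> by fact
  define d where "d = map_dist G (\<mu> \<circ> \<pi>) \<nu>"
  have mupi: "\<forall>x\<in>carrier G. unitary_op J ((\<mu> \<circ> \<pi>) x)" using mu by auto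
  have nuU: "\<forall>x\<in>carrier G. unitary_op J (\<nu> x)"
    and nuM: "\<And>x y. x \<in> carrier G \<Longrightarrow> y \<in> carrier G \<Longrightarrow> \<nu> (x \<otimes>\<^bsub>G\<^esub> y) = \<nu> x \<circ> \<nu> y"
    using nu unfolding unitary_hom_def by auto
  have near: "norm (\<nu> g v - v) \<le> d * norm v" if g: "g \<in> {k \<in> carrier G. \<pi> k = \<one>\<^bsub>G0\<^esub>}" for g v
  proof -
    have gc: "g \<in> carrier G" and pg: "\<pi> g = \<one>\<^bsub>G0\<^esub>" using g by auto
    have bl: "bounded_linear (\<lambda>v. v - \<nu> g v)"
      using onorm_unitary_diff(1)[OF unitary_op_id nuU[rule_format, OF gc]] by simp
    have "norm (v - \<nu> g v) \<le> onorm (\<lambda>v. v - \<nu> g v) * norm v" by (rule onorm[OF bl])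
    also have "\<dots> \<le> d * norm v"
      using map_dist_upper[OF mupi nuU gc] pg mu1 unfolding d_def
      by (intro mult_right_mono) (auto simp: comp_def)
    finally show ?thesis by (simp add: norm_minus_commute)
  qed
  show ?thesis
  proof (rule isometries_near_id_trivial[where S="\<nu> ` {k \<in> carrier G. \<pi> k = \<one>\<^bsub>G0\<^esub>}" and d=d])
    show "T \<circ> T \<in> \<nu> ` {k \<in> carrier G. \<pi> k = \<one>\<^bsub>G0\<^esub>}" if "T \<in> \<nu> ` {k \<in> carrier G. \<pi> k = \<one>\<^bsub>G0\<^esub>}" for T
      using that by (auto simp: nuM intro!: image_eqI[where x="_ \<otimes>\<^bsub>G\<^esub> _"])
    show "0 \<le> d" unfolding d_def using map_dist_nonneg[OF G.is_group mupi nuU] .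
  qed (use nuU k near close in \<open>auto simp: unitary_op_def d_def\<close>)
qed

lemma unitary_hom_descends:
  assumes "group_hom G G0 \<pi>" and surj: "\<pi> ` carrier G = carrier G0"
    and nu: "unitary_hom G J \<nu>" and triv: "\<And>k. k \<in> {k \<in> carrier G. \<pi> k = \<one>\<^bsub>G0\<^esub>} \<Longrightarrow> \<nu> k = id"
  obtains \<nu>0 where "unitary_hom G0 J \<nu>0" and "\<And>g. g \<in> carrier G \<Longrightarrow> \<nu>0 (\<pi> g) = \<nu> g"
proof -
  interpret group_hom G G0 \<pi> by fact
  have nuU: "\<forall>x\<in>carrier G. unitary_op J (\<nu> x)"
    and nuM: "\<And>x y. x \<in> carrier G \<Longrightarrow> y \<in> carrier G \<Longrightarrow> \<nu> (x \<otimes>\<^bsub>G\<^esub> y) = \<nu> x \<circ> \<nu> y"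
    using nu unfolding unitary_hom_def by auto
  have fibre: "\<nu> g' = \<nu> g" if g: "g \<in> carrier G" "g' \<in> carrier G" "\<pi> g' = \<pi> g" for g g'
  proof -
    have k: "inv\<^bsub>G\<^esub> g \<otimes>\<^bsub>G\<^esub> g' \<in> {k \<in> carrier G. \<pi> k = \<one>\<^bsub>G0\<^esub>}"
      using g by simp
    have "g' = g \<otimes>\<^bsub>G\<^esub> (inv\<^bsub>G\<^esub> g \<otimes>\<^bsub>G\<^esub> g')"
      using g by (simp add: G.m_assoc[symmetric])
    then have "\<nu> g' = \<nu> g \<circ> \<nu> (inv\<^bsub>G\<^esub> g \<otimes>\<^bsub>G\<^esub> g')" using g nuM by (metis G.inv_closed G.m_closed)
    then show ?thesis using triv[OF k] by simp
  qed
  define \<nu>0 where "\<nu>0 h = \<nu> (inv_into (carrier G) \<pi> h)" for h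
  have nu0: "\<nu>0 (\<pi> g) = \<nu> g" if "g \<in> carrier G" for g
    unfolding \<nu>0_def using that
    by (intro fibre) (auto intro: inv_into_into f_inv_into_f)
  have "unitary_hom G0 J \<nu>0"
    unfolding unitary_hom_def
  proof (intro conjI ballI)
    fix x assume "x \<in> carrier G0"
    then obtain g where "g \<in> carrier G" "x = \<pi> g" using surj by blast
    then show "unitary_op J (\<nu>0 x)" using nuU nu0 by simp
  next
    fix x y assume "x \<in> carrier G0" "y \<in> carrier G0"
    then obtain g g' where g: "g \<in> carrier G" "x = \<pi> g" "g' \<in> carrier G" "y = \<pi> g'"
      using surj by blast
    then show "\<nu>0 (x \<otimes>\<^bsub>G0\<^esub> y) = \<nu>0 x \<circ> \<nu>0 y"
      using nuM nu0 by (simp flip: hom_mult)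
  qed
  then show ?thesis using nu0 by (rule that)
qed

lemma close_unitary_hom_descends:
  assumes gh: "group_hom G G0 \<pi>" and surj: "\<pi> ` carrier G = carrier G0"
    and mu: "\<forall>x\<in>carrier G0. unitary_op J (\<mu> x)" and mu1: "\<mu> \<one>\<^bsub>G0\<^esub> = id"
    and nu: "unitary_hom G J \<nu>" and close: "map_dist G (\<mu> \<circ> \<pi>) \<nu> < sqrt 3"
  obtains \<nu>0 where "unitary_hom G0 J \<nu>0" and "map_dist G0 \<mu> \<nu>0 = map_dist G (\<mu> \<circ> \<pi>) \<nu>"
proof -
  obtain \<nu>0 where nu0: "unitary_hom G0 J \<nu>0" and eq: "\<And>g. g \<in> carrier G \<Longrightarrow> \<nu>0 (\<pi> g) = \<nu> g"
    using unitary_hom_descends[OF gh surj nu] unitary_hom_trivial_on_kernel[OF gh mu mu1 nu close]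
    by blast
  have "map_dist G0 \<mu> \<nu>0 = map_dist G (\<mu> \<circ> \<pi>) (\<nu>0 \<circ> \<pi>)"
    by (rule map_dist_comp_surj[OF surj, symmetric])
  also have "\<dots> = map_dist G (\<mu> \<circ> \<pi>) \<nu>" unfolding map_dist_def by (intro SUP_cong) (auto simp: eq)
  finally show ?thesis using nu0 that by blast
qed

lemma min_Inf_eq_if_agree_below:
  fixes A B :: "real set"
  assumes "B \<subseteq> A" "B \<noteq> {}" "bdd_below A" and below: "\<And>a. a \<in> A \<Longrightarrow> a < c \<Longrightarrow> a \<in> B"
  shows "min (Inf A) c = min (Inf B) c"
proof -
  have AB: "Inf A \<le> Inf B" by (rule cInf_superset_mono[OF assms(2,3,1)])
  have "Inf B \<le> Inf A" if "Inf A < c"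
  proof (rule ccontr)
    assume "\<not> Inf B \<le> Inf A"
    then have "Inf A < min (Inf B) c" using that by simp
    then obtain a where a: "a \<in> A" "a < min (Inf B) c"
      using cInf_less_iff[of A] assms(1-3) by blast
    then have "Inf B \<le> a" using below bdd_below_mono[OF assms(3,1)] by (simp add: cInf_lower)
    then show False using a by simp
  qed
  then show ?thesis using AB by linarith
qed

theorem lemma1p2:
  fixes G :: "('g, 'a) monoid_scheme" and G0 :: "('g0, 'b) monoid_scheme"
    and \<pi> :: "'g \<Rightarrow> 'g0"
    and J :: "'h::{real_inner, complete_space} \<Rightarrow> 'h"
    and \<mu> :: "'g0 \<Rightarrow> 'h \<Rightarrow> 'h"
  assumes "group G" and "group G0"
    and "\<pi> \<in> hom G G0" and "\<pi> ` carrier G = carrier G0"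
    and "complex_structure J"
    and "\<forall>x\<in>carrier G0. unitary_op J (\<mu> x)"
    and "\<mu> \<one>\<^bsub>G0\<^esub> = id"
  shows "defect G0 \<mu> = defect G (\<mu> \<circ> \<pi>)
    \<and> min (hom_dist G J (\<mu> \<circ> \<pi>)) (sqrt 3) = min (hom_dist G0 J \<mu>) (sqrt 3)"
proof -
  note surj = assms(4) and mu = assms(6) and mu1 = assms(7)
  have gh: "group_hom G G0 \<pi>" using assms(1-3) by (simp add: group_hom_axioms_def group_hom_def)
  define A where "A = {map_dist G (\<mu> \<circ> \<pi>) \<nu> | \<nu>. unitary_hom G J \<nu>}"
  define B where "B = {map_dist G0 \<mu> \<nu>0 | \<nu>0. unitary_hom G0 J \<nu>0}"
  have mupi: "\<forall>x\<in>carrier G. unitary_op J ((\<mu> \<circ> \<pi>) x)"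
    using mu assms(3) by (auto simp: hom_in_carrier)
  have "B \<subseteq> A"
  proof
    fix b assume "b \<in> B"
    then obtain \<nu>0 where nu0: "unitary_hom G0 J \<nu>0" and b: "b = map_dist G0 \<mu> \<nu>0"
      unfolding B_def by auto
    have "b = map_dist G (\<mu> \<circ> \<pi>) (\<nu>0 \<circ> \<pi>)" unfolding b by (rule map_dist_comp_surj[OF surj, symmetric])
    then show "b \<in> A" unfolding A_def using unitary_hom_comp[OF nu0 assms(3)] by blast
  qed
  moreover have "B \<noteq> {}"
    using unitary_op_id unfolding B_def unitary_hom_def by (auto intro!: exI[of _ "\<lambda>_. id"])
  moreover have "bdd_below A"
  proof (rule bdd_belowI)
    fix a assume "a \<in> A"
    then show "0 \<le> a"
      unfolding A_def unitary_hom_def using map_dist_nonneg[OF assms(1) mupi] by (auto simp: comp_def)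
  qed
  moreover have "a \<in> B" if "a \<in> A" "a < sqrt 3" for a
  proof -
    obtain \<nu> where nu: "unitary_hom G J \<nu>" and a: "a = map_dist G (\<mu> \<circ> \<pi>) \<nu>"
      using \<open>a \<in> A\<close> unfolding A_def by auto
    then obtain \<nu>0 where "unitary_hom G0 J \<nu>0" "map_dist G0 \<mu> \<nu>0 = a"
      using close_unitary_hom_descends[OF gh surj mu mu1 nu] \<open>a < sqrt 3\<close> by metis
    then show ?thesis unfolding B_def by blast
  qed
  ultimately have "min (Inf A) (sqrt 3) = min (Inf B) (sqrt 3)"
    by (rule min_Inf_eq_if_agree_below)
  then have "min (hom_dist G J (\<mu> \<circ> \<pi>)) (sqrt 3) = min (hom_dist G0 J \<mu>) (sqrt 3)"
    unfolding hom_dist_def A_def B_def .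
  with defect_comp_surj_hom[OF assms(3) surj, of \<mu>] show ?thesis by simp
qed

end
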